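(* Let $G\in\mathcal{M}_k(n,s)$ and let $\mathrm{Sh}(G)$ be any $k$-graph obtained from $G$ by a finite sequence of shifts $\mathrm{sh}_{ij}$ (with $i<j$) which is invariant under all shifts, i.e. $\mathrm{sh}_{ij}(\mathrm{Sh}(G))=\mathrm{Sh}(G)$ for all vertices $i<j$. Then: (i) $\mathrm{Sh}(G)\in\mathcal{M}_k(n,s)$; (ii) if $n\neq 2k$ and $\mathrm{Sh}(G)\in\mathrm{Cov}_k(n,s)$, then $G\in\mathrm{Cov}_k(n,s)$; (iii) if $n\neq 2k$ and $\mathrm{Sh}(G)\in\mathrm{Cl}_k(n,s)$, then $G\in\mathrm{Cl}_k(n,s)$.
   Context: A $k$-uniform hypergraph ($k$-graph) $G=(V,E)$ consists of a finite vertex set $V\subseteq\mathbb{N}$ and a family $E$ of $k$-element subsets of $V$ (edges). A matching is a family of pairwise disjoint edges; $\mu(G)$ is the size of a largest matching in $G$. Let $\mathcal{H}_k(n,s)$ be the set of all $k$-graphs $G=(V,E)$ with $|V|=n$ and $\mu(G)=s$; let $\mu_k(n,s)=\max\{|E(G)|: G\in\mathcal{H}_k(n,s)\}$ and $\mathcal{M}_k(n,s)=\{G\in\mathcal{H}_k(n,s): |E(G)|=\mu_k(n,s)\}$. $\mathrm{Cov}_k(n,s)$ is the family of $k$-graphs $G=(V,E)$ with $|V|=n$ such that for some $S\subseteq V$ with $|S|=s$, $E=\{e\subseteq V: |e|=k,\ e\cap S\neq\emptyset\}$. $\mathrm{Cl}_k(n,s)$ is the family of $k$-graphs $G=(V,E)$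 with $|V|=n$ such that for some $T\subseteq V$ with $|T|=ks+k-1$, $E=\{e\subseteq T: |e|=k\}$. For vertices $i<j$, the $(i,j)$-shift $\mathrm{sh}_{ij}(G)$ is the $k$-graph on $V$ obtained from $G$ by replacing each edge $e\in E$ with $j\in e$, $i\notin e$ and $(e\setminus\{j\})\cup\{i\}\notin E$ by the set $(e\setminus\{j\})\cup\{i\}$ (all other edges are kept). *)

theory Defs
  imports Main
begin

type_synonym hgraph = "nat set \<times> nat set set"

definition kgraph :: "nat \<Rightarrow> hgraph \<Rightarrow> bool" where
  "kgraph k G \<longleftrightarrow> finite (fst G) \<and> (\<forall>e\<in>snd G. e \<subseteq> fst G \<and> card e = k)"

definition is_matching :: "nat set set \<Rightarrow> nat set set \<Rightarrow> bool" where
  "is_matching E M \<longleftrightarrow> M \<subseteq> E \<and> (\<forall>e\<in>M. \<forall>f\<in>M. e \<noteq> f \<longrightarrow> e \<inter> f = {})"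

definition mu :: "nat set set \<Rightarrow> nat" where
  "mu E = Max {card M | M. is_matching E M}"

definition Hk :: "nat \<Rightarrow> nat \<Rightarrow> nat \<Rightarrow> hgraph set" where
  "Hk k n s = {G. kgraph k G \<and> card (fst G) = n \<and> mu (snd G) = s}"

definition mu_k :: "nat \<Rightarrow> nat \<Rightarrow> nat \<Rightarrow> nat" where
  "mu_k k n s = Max {card (snd G) | G. G \<in> Hk k n s}"

definition Mk :: "nat \<Rightarrow> nat \<Rightarrow> nat \<Rightarrow> hgraph set" where
  "Mk k n s = {G \<in> Hk k n s. card (snd G) = mu_k k n s}"

definition Cov :: "nat \<Rightarrow> nat \<Rightarrow> nat \<Rightarrow> hgraph set" where
  "Cov k n s = {G. finite (fst G) \<and> card (fst G) = n \<and>
     (\<exists>S. S \<subseteq> fst G \<and> card S = s \<and>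
        snd G = {e. e \<subseteq> fst G \<and> card e = k \<and> e \<inter> S \<noteq> {}})}"

definition Cl :: "nat \<Rightarrow> nat \<Rightarrow> nat \<Rightarrow> hgraph set" where
  "Cl k n s = {G. finite (fst G) \<and> card (fst G) = n \<and>
     (\<exists>T. T \<subseteq> fst G \<and> card T = k * s + k - 1 \<and>
        snd G = {e. e \<subseteq> T \<and> card e = k})}"

definition shift :: "nat \<Rightarrow> nat \<Rightarrow> hgraph \<Rightarrow> hgraph" where
  "shift i j G = (fst G,
     (\<lambda>e. if j \<in> e \<and> i \<notin> e \<and> insert i (e - {j}) \<notin> snd G
          then insert i (e - {j}) else e) ` snd G)"

definition shifts :: "(nat \<times> nat) list \<Rightarrow> hgraph \<Rightarrow> hgraph" where
  "shifts ps G = fold (\<lambda>(i, j) H. shift i j H) ps G"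

end

theory Submission
  imports Defs "HOL-Combinatorics.Transposition"
begin

text \<open>A shift preserves the number of edges and cannot increase the matching number, since the
  transposition \<open>(i j)\<close> maps any matching of \<open>sh\<^sub>i\<^sub>j(G)\<close> into \<open>G\<close>.  For an extremal \<open>G\<close> the matching
  number cannot drop either, as one could then add edges until it is \<open>s\<close> again.

  For (ii) and (iii) one undoes one shift at a time.  If \<open>sh\<^sub>i\<^sub>j(G)\<close> is a cover or clique graph, the
  pairs \<open>{i \<union> C, j \<union> C}\<close> of which \<open>G\<close> contains exactly one member are indexed by \<open>(k-1)\<close>-subsets \<open>C\<close>
  of a fixed set \<open>U\<close>.  If \<open>G\<close> contained \<open>i \<union> C\<close> and \<open>j \<union> D\<close> with \<open>C\<close>, \<open>D\<close> disjoint, these two edges and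
  \<open>s - 1\<close> further edges of the cover or clique would form a matching of size \<open>s + 1\<close>.  As the Kneser
  graph on the \<open>(k-1)\<close>-subsets of \<open>U\<close> is connected (this is where \<open>n \<noteq> 2k\<close> enters), \<open>G\<close> picks the
  same member of every such pair, so \<open>G\<close> is \<open>sh\<^sub>i\<^sub>j(G)\<close> or its image under \<open>(i j)\<close>.  The clique case
  with \<open>s = 1\<close> cannot occur at all: a star has more edges than a clique on \<open>2k - 1\<close> vertices.\<close>

lemma transpose_image_insert:
  assumes "i \<notin> D" "j \<notin> D"
  shows "transpose i j ` insert i D = insert j D"
  using assms by (simp add: transpose_image_eq)

lemma transpose_image_subset_iff: "transpose i j ` x \<subseteq> Y \<longleftrightarrow> x \<subseteq> transpose i j ` Y"
  by (auto simp: in_transpose_image_iff)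

lemma transpose_image_disjoint_iff: "transpose i j ` x \<inter> Y = {} \<longleftrightarrow> x \<inter> transpose i j ` Y = {}"
  by (auto simp: in_transpose_image_iff)

lemma card_transpose_image [simp]: "card (transpose i j ` x) = card x"
  by (simp add: card_image)

definition transposed :: "nat \<Rightarrow> nat \<Rightarrow> nat set set \<Rightarrow> nat set set" where
  "transposed i j E = (`) (transpose i j) ` E"

lemma mem_transposed: "e \<in> transposed i j E \<longleftrightarrow> transpose i j ` e \<in> E"
proof
  assume "e \<in> transposed i j E"
  then obtain a where "a \<in> E" "e = transpose i j ` a" by (auto simp: transposed_def)
  then show "transpose i j ` e \<in> E" by (simp add: image_comp)
next
  assume "transpose i j ` e \<in> E"
  then have "transpose i j ` (transpose i j ` e) \<in> transposed i j E"
    by (simp add: transposed_def)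
  then show "e \<in> transposed i j E" by (simp add: image_comp)
qed

lemma separating_cases:
  obtains "i \<in> x \<longleftrightarrow> j \<in> x"
    | D where "x = insert i D" "i \<notin> D" "j \<notin> D"
    | D where "x = insert j D" "i \<notin> D" "j \<notin> D"
  by (metis Diff_iff insert_Diff singletonI)

section \<open>Shifts\<close>

lemma fst_shift [simp]: "fst (shift i j H) = fst H"
  by (simp add: shift_def)

definition shift_edge :: "nat \<Rightarrow> nat \<Rightarrow> nat set set \<Rightarrow> nat set \<Rightarrow> nat set" where
  "shift_edge i j E e =
     (if j \<in> e \<and> i \<notin> e \<and> insert i (e - {j}) \<notin> E then insert i (e - {j}) else e)"

lemma shift_edge_moved:
  "j \<in> e \<and> i \<notin> e \<and> insert i (e - {j}) \<notin> E \<Longrightarrow> shift_edge i j E e = insert i (e - {j})"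
  unfolding shift_edge_def by (rule if_P)

lemma shift_edge_fixed:
  "\<not> (j \<in> e \<and> i \<notin> e \<and> insert i (e - {j}) \<notin> E) \<Longrightarrow> shift_edge i j E e = e"
  unfolding shift_edge_def by (rule if_not_P)

lemma snd_shift: "snd (shift i j H) = shift_edge i j (snd H) ` snd H"
  by (simp add: shift_def shift_edge_def)

lemma shift_mem_balanced:
  assumes "i \<in> e \<longleftrightarrow> j \<in> e"
  shows "e \<in> snd (shift i j H) \<longleftrightarrow> e \<in> snd H"
  using assms by (force simp: snd_shift shift_edge_def)

lemma shift_mem_insert_first:
  assumes "i \<noteq> j" "i \<notin> D" "j \<notin> D"
  shows "insert i D \<in> snd (shift i j H) \<longleftrightarrow> insert i D \<in> snd H \<or> insert j D \<in> snd H"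
proof
  assume "insert i D \<in> snd (shift i j H)"
  then obtain e where e: "e \<in> snd H" "insert i D = shift_edge i j (snd H) e"
    by (auto simp: snd_shift)
  show "insert i D \<in> snd H \<or> insert j D \<in> snd H"
  proof (cases "j \<in> e \<and> i \<notin> e \<and> insert i (e - {j}) \<notin> snd H")
    case True
    then have "e = insert j D" using e(2) assms by (auto simp: shift_edge_moved)
    then show ?thesis using e(1) by simp
  next
    case False
    then show ?thesis using e by (simp add: shift_edge_fixed)
  qed
next
  assume "insert i D \<in> snd H \<or> insert j D \<in> snd H"
  moreover have "shift_edge i j (snd H) (insert i D) = insert i D"
    by (simp add: shift_edge_def)
  moreover have "insert i D \<notin> snd H \<Longrightarrow> shift_edge i j (snd H) (insert j D) = insert i D"
    using assms by (simp add: shift_edge_def insert_Diff_if)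
  ultimately show "insert i D \<in> snd (shift i j H)"
    unfolding snd_shift by (metis image_eqI)
qed

lemma shift_mem_insert_second:
  assumes "i \<noteq> j" "i \<notin> D" "j \<notin> D"
  shows "insert j D \<in> snd (shift i j H) \<longleftrightarrow> insert i D \<in> snd H \<and> insert j D \<in> snd H"
  using assms by (force simp: snd_shift shift_edge_def)

lemma inj_on_shift_edge:
  assumes "i \<noteq> j"
  shows "inj_on (shift_edge i j E) E"
proof
  fix a b assume ab: "a \<in> E" "b \<in> E" "shift_edge i j E a = shift_edge i j E b"
  let ?moved = "\<lambda>e. j \<in> e \<and> i \<notin> e \<and> insert i (e - {j}) \<notin> E"
  have undo: "insert j (insert i (e - {j}) - {i}) = e" if "j \<in> e" "i \<notin> e" for e
    using that assms by auto
  consider "?moved a" "?moved b" | "?moved a" "\<not> ?moved b" | "\<not> ?moved a" "?moved b"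
    | "\<not> ?moved a" "\<not> ?moved b" by blast
  then show "a = b"
  proof cases
    case 1
    then show ?thesis using ab(3) undo[of a] undo[of b] by (simp add: shift_edge_moved)
  next
    case 2
    then show ?thesis using ab shift_edge_moved shift_edge_fixed by metis
  next
    case 3
    then show ?thesis using ab shift_edge_moved shift_edge_fixed by metis
  next
    case 4
    then show ?thesis using ab(3) by (simp add: shift_edge_fixed)
  qed
qed

lemma card_shift:
  assumes "i \<noteq> j"
  shows "card (snd (shift i j H)) = card (snd H)"
  unfolding snd_shift by (rule card_image[OF inj_on_shift_edge[OF assms]])

lemma kgraph_shift:
  assumes "kgraph k H" "i \<in> fst H"
  shows "kgraph k (shift i j H)"
proof -
  have "shift_edge i j (snd H) e \<subseteq> fst H \<and> card (shift_edge i j (snd H) e) = k"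
    if e: "e \<in> snd H" for e
  proof -
    have e': "e \<subseteq> fst H" "card e = k" "finite e"
      using assms e by (auto simp: kgraph_def intro: finite_subset)
    show ?thesis
    proof (cases "j \<in> e \<and> i \<notin> e \<and> insert i (e - {j}) \<notin> snd H")
      case True
      then have "card e > 0" using e' card_gt_0_iff by blast
      then show ?thesis using True e' assms(2) by (auto simp: shift_edge_moved)
    next
      case False
      then show ?thesis using e' by (simp add: shift_edge_fixed)
    qed
  qed
  then show ?thesis
    using assms(1) by (auto simp: kgraph_def snd_shift)
qed

lemma shifts_Cons: "shifts ((i, j) # ps) H = shifts ps (shift i j H)"
  by (simp add: shifts_def)

section \<open>Matchings\<close>

lemma finite_matching_cards:
  assumes "finite E"
  shows "finite {card M | M. is_matching E M}"
proof (rule finite_subset)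
  show "{card M | M. is_matching E M} \<subseteq> {..card E}"
    using assms by (auto simp: is_matching_def intro: card_mono)
qed simp

lemma card_le_mu: "finite E \<Longrightarrow> is_matching E M \<Longrightarrow> card M \<le> mu E"
  unfolding mu_def by (rule Max_ge) (auto simp: finite_matching_cards)

lemma mu_attained:
  assumes "finite E"
  obtains M where "is_matching E M" "card M = mu E"
proof -
  have "mu E \<in> {card M | M. is_matching E M}"
    unfolding mu_def using finite_matching_cards[OF assms]
    by (intro Max_in) (auto simp: is_matching_def)
  then obtain M where "is_matching E M" "mu E = card M" by blast
  then show ?thesis using that by simp
qed

lemma mu_le:
  assumes "finite E" "\<And>M. is_matching E M \<Longrightarrow> card M \<le> b"
  shows "mu E \<le> b"
  using assms by (metis mu_attained)

lemma mu_mono: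
  assumes "finite F" "E \<subseteq> F"
  shows "mu E \<le> mu F"
proof -
  obtain M where "is_matching E M" "card M = mu E"
    using mu_attained finite_subset[OF assms(2,1)] by blast
  then have "is_matching F M" "card M = mu E"
    using assms(2) by (auto simp: is_matching_def)
  then show ?thesis using card_le_mu[OF assms(1)] by metis
qed

lemma mu_le_mu_Diff_singleton:
  assumes "finite F"
  shows "mu F \<le> mu (F - {e}) + 1"
proof -
  obtain M where M: "is_matching F M" "card M = mu F"
    using mu_attained assms by blast
  have "is_matching (F - {e}) (M - {e})"
    using M(1) by (auto simp: is_matching_def)
  then have "card (M - {e}) \<le> mu (F - {e})"
    using assms by (intro card_le_mu) auto
  moreover have "finite M"
    using M(1) assms by (auto simp: is_matching_def intro: finite_subset)
  then have "card M \<le> card (M - {e}) + 1"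
    by (simp add: card_Diff_singleton_if) arith
  ultimately show ?thesis using M by simp
qed

lemma kgraph_edge_card_pos: "kgraph k H \<Longrightarrow> x \<in> e \<Longrightarrow> e \<in> snd H \<Longrightarrow> k \<ge> 1"
  unfolding kgraph_def by (metis One_nat_def Suc_leI card_gt_0_iff empty_iff finite_subset)

lemma kgraph_finite_edges: "kgraph k H \<Longrightarrow> finite (snd H)"
  unfolding kgraph_def by (meson Pow_iff finite_Pow_iff finite_subset subsetI)

lemma card_matching_mult_le:
  assumes "kgraph k H" "is_matching (snd H) M"
  shows "card M * k \<le> card (fst H)"
proof -
  have M: "\<Union>M \<subseteq> fst H" "\<forall>e\<in>M. card e = k \<and> finite e"
    using assms by (auto simp: kgraph_def is_matching_def intro: finite_subset)
  have "pairwise disjnt M"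
    using assms(2) by (auto simp: is_matching_def pairwise_def disjnt_def)
  then have "card M * k = card (\<Union>M)"
    using M by (simp add: card_Union_disjoint)
  also have "\<dots> \<le> card (fst H)"
    using M assms(1) by (intro card_mono) (auto simp: kgraph_def)
  finally show ?thesis by simp
qed

lemma card_add_two_le_mu:
  assumes "finite E" "is_matching E M" "f \<in> E" "g \<in> E" "f \<noteq> {}" "g \<noteq> {}"
    "f \<inter> g = {}" "\<forall>e\<in>M. e \<inter> (f \<union> g) = {}"
  shows "card M + 2 \<le> mu E"
proof -
  have "finite M" "f \<notin> M" "g \<notin> M" "f \<noteq> g"
    using assms finite_subset[of M E] by (auto simp: is_matching_def)
  then have "card (insert f (insert g M)) = card M + 2" by simp
  moreover have "is_matching E (insert f (insert g M))"
    using assms by (auto simp: is_matching_def)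
  ultimately show ?thesis using card_le_mu[OF assms(1)] by metis
qed

definition ksubsets :: "nat set \<Rightarrow> nat \<Rightarrow> nat set set" where
  "ksubsets V k = {e. e \<subseteq> V \<and> card e = k}"

lemma finite_ksubsets: "finite V \<Longrightarrow> finite (ksubsets V k)"
  unfolding ksubsets_def by (rule finite_subset[of _ "Pow V"]) auto

lemma kgraph_iff_ksubsets: "kgraph k H \<longleftrightarrow> finite (fst H) \<and> snd H \<subseteq> ksubsets (fst H) k"
  unfolding kgraph_def ksubsets_def by auto

lemma exists_matching_ksubsets:
  assumes "finite R" "m * k \<le> card R" "k \<ge> 1"
  shows "\<exists>M. is_matching (ksubsets R k) M \<and> card M = m"
  using assms
proof (induction m arbitrary: R)
  case 0
  show ?case by (intro exI[of _ "{}"]) (simp add: is_matching_def)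
next
  case (Suc m)
  obtain e where e: "e \<subseteq> R" "card e = k"
    using obtain_subset_with_card_n[of k R] Suc.prems by auto
  then have "card (R - e) = card R - k"
    using Suc.prems(1) by (simp add: card_Diff_subset finite_subset)
  then have "m * k \<le> card (R - e)"
    using Suc.prems(2) by simp
  then obtain M where M: "is_matching (ksubsets (R - e) k) M" "card M = m"
    using Suc.IH[of "R - e"] Suc.prems by auto
  have sub: "x \<subseteq> R - e" if "x \<in> M" for x
    using M(1) that by (auto simp: is_matching_def ksubsets_def)
  have "e \<noteq> {}" using e Suc.prems by auto
  then have "e \<notin> M" using sub by blast
  moreover have "finite M"
    using M(1) finite_ksubsets[of "R - e" k] Suc.prems(1)
    by (metis finite_Diff finite_subset is_matching_def)
  moreover have "is_matching (ksubsets R k) (insert e M)"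
    using M(1) e sub unfolding is_matching_def ksubsets_def by blast
  ultimately show ?case using M(2) by (intro exI[of _ "insert e M"]) simp
qed

lemma exists_matching_cover:
  assumes "finite S" "finite R" "S \<inter> R = {}" "card S * (k - 1) \<le> card R" "k \<ge> 1"
  shows "\<exists>M. is_matching {e. e \<subseteq> S \<union> R \<and> card e = k \<and> e \<inter> S \<noteq> {}} M \<and> card M = card S"
  using assms
proof (induction S arbitrary: R rule: finite_induct)
  case empty
  show ?case by (intro exI[of _ "{}"]) (simp add: is_matching_def)
next
  case (insert x S)
  have "k - 1 \<le> card R" using insert.prems(3) insert.hyps by simp
  then obtain A where A: "A \<subseteq> R" "card A = k - 1"
    using obtain_subset_with_card_n by metis
  have finA: "finite A" using A insert.prems(1) finite_subset by blast
  have "card S * (k - 1) \<le> card (R - A)"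
    using A insert.prems(3) insert.hyps by (simp add: card_Diff_subset finA)
  moreover have "S \<inter> (R - A) = {}" using insert.prems by auto
  ultimately obtain M where M:
    "is_matching {e. e \<subseteq> S \<union> (R - A) \<and> card e = k \<and> e \<inter> S \<noteq> {}} M" "card M = card S"
    using insert.IH[of "R - A"] insert.prems by auto
  have xR: "x \<notin> R" using insert.prems(2) by blast
  then have xA: "x \<notin> A" using A(1) by blast
  have edge: "card (insert x A) = k"
    using A(2) finA xA insert.prems(4) by simp
  have "A \<inter> S = {}" using A(1) insert.prems(2) by auto
  then have xA_out: "insert x A \<inter> (S \<union> (R - A)) = {}"
    using xR insert.hyps(2) by auto
  have M_sub: "e \<subseteq> S \<union> (R - A)" if "e \<in> M" for e
    using M(1) that by (auto simp: is_matching_def)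
  have disj: "\<forall>e\<in>M. e \<inter> insert x A = {}"
    using M_sub xA_out by auto
  have "finite M"
    using M_sub insert.hyps(1) insert.prems(1)
    by (intro finite_subset[of M "Pow (S \<union> R)"]) auto
  moreover have "insert x A \<notin> M"
    using disj by (metis Int_absorb insert_not_empty)
  moreover have "is_matching {e. e \<subseteq> insert x S \<union> R \<and> card e = k \<and> e \<inter> insert x S \<noteq> {}}
      (insert (insert x A) M)"
  proof -
    have "M \<subseteq> {e. e \<subseteq> insert x S \<union> R \<and> card e = k \<and> e \<inter> insert x S \<noteq> {}}"
      using M(1) by (auto simp: is_matching_def)
    moreover have "insert x A \<subseteq> insert x S \<union> R" using A(1) by blast
    ultimately show ?thesis
      using M(1) disj edge unfolding is_matching_def by (simp add: Int_commute)
  qed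
  ultimately show ?case
    using M(2) insert.hyps by (intro exI[of _ "insert (insert x A) M"]) simp
qed

lemma mem_shift_not_mem:
  assumes ij: "i \<noteq> j" and f: "f \<in> snd (shift i j H)" "f \<notin> snd H"
  shows "i \<in> f" "j \<notin> f" "insert j (f - {i}) \<in> snd H"
proof -
  have "i \<in> f \<and> j \<notin> f \<and> insert j (f - {i}) \<in> snd H"
  proof (cases rule: separating_cases[of i f j])
    case 1
    then show ?thesis using f shift_mem_balanced by blast
  next
    case (2 D)
    then show ?thesis using f shift_mem_insert_first[OF ij] by auto
  next
    case (3 D)
    then show ?thesis using f shift_mem_insert_second[OF ij] by auto
  qed
  then show "i \<in> f" "j \<notin> f" "insert j (f - {i}) \<in> snd H" by simp_all
qed

lemma matching_transposed:
  assumes M: "is_matching E M" and F: "\<And>h. h \<in> M \<Longrightarrow> transpose i j ` h \<in> F"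
  shows "is_matching F (transposed i j M)" "card (transposed i j M) = card M"
proof -
  have inj: "inj_on ((`) (transpose i j)) M"
    by (rule inj_on_image) simp
  show "card (transposed i j M) = card M"
    unfolding transposed_def by (rule card_image[OF inj])
  show "is_matching F (transposed i j M)"
    unfolding is_matching_def
  proof (intro conjI ballI impI)
    show "transposed i j M \<subseteq> F" using F by (auto simp: transposed_def)
  next
    fix x y assume "x \<in> transposed i j M" "y \<in> transposed i j M" "x \<noteq> y"
    then obtain a b where "a \<in> M" "b \<in> M" "a \<noteq> b" "x \<inter> y = transpose i j ` (a \<inter> b)"
      by (auto simp: transposed_def image_Int[OF inj_transpose])
    then show "x \<inter> y = {}" using M by (simp add: is_matching_def)
  qed
qed

text \<open>A matching of the shifted graph that uses a moved edge \<open>i \<union> D\<close> cannot use any other edge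
  through \<open>i\<close>, so the transposition \<open>(i j)\<close> maps it into the original graph.\<close>

lemma shift_matching_transfer:
  assumes ij: "i \<noteq> j" and M: "is_matching (snd (shift i j H)) M"
  obtains M' where "is_matching (snd H) M'" "card M' = card M"
proof (cases "M \<subseteq> snd H")
  case True
  then show ?thesis using that M by (auto simp: is_matching_def)
next
  case False
  then obtain f where f: "f \<in> M" "f \<notin> snd H" by blast
  then have "f \<in> snd (shift i j H)" using M by (auto simp: is_matching_def)
  note moved = mem_shift_not_mem[OF ij this f(2)]
  have "transpose i j ` h \<in> snd H" if h: "h \<in> M" for h
  proof (cases "h = f")
    case True
    then show ?thesis
      using moved transpose_image_insert[of i "f - {i}" j] by (simp add: insert_absorb)
  next
    case False
    have hE': "h \<in> snd (shift i j H)" using h M by (auto simp: is_matching_def)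
    have "i \<notin> h" using False h f M moved(1) by (auto simp: is_matching_def)
    show ?thesis
    proof (cases "j \<in> h")
      case True
      then have "h = insert j (h - {j})" by auto
      then show ?thesis
        using hE' \<open>i \<notin> h\<close> ij shift_mem_insert_second[of i j "h - {j}" H]
          transpose_image_insert[of j "h - {j}" i]
        by (metis Diff_iff insert_iff transpose_commute)
    next
      case False
      then show ?thesis using hE' \<open>i \<notin> h\<close> shift_mem_balanced by (simp add: transpose_image_eq)
    qed
  qed
  then show ?thesis using that matching_transposed[OF M] by blast
qed

lemma mu_shift_le:
  assumes "i \<noteq> j" "finite (snd H)" "finite (snd (shift i j H))"
  shows "mu (snd (shift i j H)) \<le> mu (snd H)"
  using assms by (metis mu_le card_le_mu shift_matching_transfer)

section \<open>Extremal graphs are closed under shifts\<close>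

lemma card_le_mu_k:
  assumes "G \<in> Hk k n s"
  shows "card (snd G) \<le> mu_k k n s"
proof -
  have "{card (snd G) | G. G \<in> Hk k n s} \<subseteq> {..2 ^ n}"
  proof
    fix x assume "x \<in> {card (snd G) | G. G \<in> Hk k n s}"
    then obtain G where G: "G \<in> Hk k n s" "x = card (snd G)" by blast
    then have "snd G \<subseteq> Pow (fst G)" "finite (fst G)" "card (fst G) = n"
      by (auto simp: Hk_def kgraph_def)
    then have "card (snd G) \<le> 2 ^ n"
      by (metis card_Pow card_mono finite_Pow_iff)
    then show "x \<in> {..2 ^ n}" using G(2) by simp
  qed
  then have "finite {card (snd G) | G. G \<in> Hk k n s}"
    by (rule finite_subset) simp
  then show ?thesis
    unfolding mu_k_def using assms by (intro Max_ge) blast+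
qed

lemma exists_intermediate_mu:
  assumes "finite F" "E \<subseteq> F" "mu E \<le> s" "s \<le> mu F"
  shows "\<exists>F'. E \<subseteq> F' \<and> F' \<subseteq> F \<and> mu F' = s"
  using assms
proof (induction "card F" arbitrary: F rule: less_induct)
  case less
  show ?case
  proof (cases "mu F = s")
    case True
    then show ?thesis using less by blast
  next
    case False
    then have "F \<noteq> E" using less by auto
    then obtain e where e: "e \<in> F" "e \<notin> E" using less by blast
    have "s \<le> mu (F - {e})"
      using False less mu_le_mu_Diff_singleton[OF less.prems(1), of e] by linarith
    moreover have "card (F - {e}) < card F" "finite (F - {e})" "E \<subseteq> F - {e}"
      using card_Diff1_less[OF less.prems(1) e(1)] less e by auto
    ultimately show ?thesis
      using less.hyps[of "F - {e}"] less.prems(3) by blast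
  qed
qed

lemma Mk_shift:
  assumes H: "H \<in> Mk k n s" and ij: "i \<in> fst H" "i \<noteq> j"
  shows "shift i j H \<in> Mk k n s"
proof -
  let ?E' = "snd (shift i j H)" and ?F = "ksubsets (fst H) k"
  have H': "kgraph k H" "card (fst H) = n" "mu (snd H) = s" "card (snd H) = mu_k k n s"
    using H by (auto simp: Mk_def Hk_def)
  have kg: "kgraph k (shift i j H)"
    using kgraph_shift H'(1) ij(1) .
  have card: "card ?E' = mu_k k n s"
    using card_shift ij(2) H' by simp
  have finF: "finite ?F"
    using H' finite_ksubsets by (simp add: kgraph_def)
  \<comment> \<open>Otherwise adding complete-graph edges to the shifted graph reaches matching number \<open>s\<close>
    with more than \<open>mu_k k n s\<close> edges.\<close>
  have "mu ?E' = s"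
  proof (rule ccontr)
    assume "mu ?E' \<noteq> s"
    moreover have "mu ?E' \<le> s"
      using mu_shift_le[OF ij(2) kgraph_finite_edges[OF H'(1)] kgraph_finite_edges[OF kg]] H'(3)
      by simp
    ultimately have lt: "mu ?E' < s" by simp
    have "s \<le> mu ?F"
      using mu_mono[OF finF] H' by (metis kgraph_iff_ksubsets)
    moreover have "?E' \<subseteq> ?F"
      using kg by (simp add: kgraph_iff_ksubsets)
    ultimately obtain F' where F': "?E' \<subseteq> F'" "F' \<subseteq> ?F" "mu F' = s"
      using exists_intermediate_mu[OF finF, of ?E' s] lt by auto
    then have "(fst H, F') \<in> Hk k n s"
      using H' by (auto simp: Hk_def kgraph_iff_ksubsets)
    then have "card F' \<le> card ?E'"
      using card_le_mu_k card by fastforce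
    moreover have "finite F'"
      using F' finF finite_subset by blast
    ultimately have "F' = ?E'"
      using F'(1) card_seteq by blast
    then show False using F' lt by simp
  qed
  then show ?thesis
    using kg H' card by (simp add: Mk_def Hk_def)
qed

lemma Mk_shifts:
  assumes "H \<in> Mk k n s" "\<forall>(i, j) \<in> set ps. i < j \<and> i \<in> fst H \<and> j \<in> fst H"
  shows "shifts ps H \<in> Mk k n s"
  using assms
proof (induction ps arbitrary: H)
  case Nil
  then show ?case by (simp add: shifts_def)
next
  case (Cons p ps)
  obtain i j where p: "p = (i, j)" by force
  then have "shift i j H \<in> Mk k n s"
    using Cons.prems by (intro Mk_shift) auto
  then show ?case
    using Cons p by (simp add: shifts_Cons)
qed

lemma Mk_complete:
  assumes H: "H \<in> Mk k n s" and small: "n < k * (s + 1)"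
  shows "snd H = ksubsets (fst H) k"
proof -
  let ?F = "ksubsets (fst H) k"
  have H': "kgraph k H" "card (fst H) = n" "mu (snd H) = s"
    using H by (auto simp: Mk_def Hk_def)
  have finF: "finite ?F" and sub: "snd H \<subseteq> ?F" and kgF: "kgraph k (fst H, ?F)"
    using H' finite_ksubsets by (auto simp: kgraph_iff_ksubsets)
  have "mu ?F \<le> s"
  proof (rule mu_le[OF finF])
    fix M assume "is_matching ?F M"
    then have "card M * k \<le> n"
      using card_matching_mult_le[OF kgF] H'(2) by simp
    then have "card M * k < (s + 1) * k"
      using small by (simp add: mult.commute)
    then show "card M \<le> s"
      using mult_less_cancel2[of "card M" k "s + 1"] by simp
  qed
  then have "(fst H, ?F) \<in> Hk k n s"
    using mu_mono[OF finF sub] kgF H' by (simp add: Hk_def)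
  then have "card ?F \<le> card (snd H)"
    using card_le_mu_k[of "(fst H, ?F)"] H by (simp add: Mk_def)
  then show ?thesis
    using card_seteq[OF finF sub] by simp
qed

lemma reflect_shifts:
  assumes step: "\<And>H i j. H \<in> Mk k n s \<Longrightarrow> i \<in> fst H \<Longrightarrow> j \<in> fst H \<Longrightarrow> i \<noteq> j \<Longrightarrow>
      shift i j H \<in> P \<Longrightarrow> H \<in> P"
    and H: "H \<in> Mk k n s" "\<forall>(i, j) \<in> set ps. i < j \<and> i \<in> fst H \<and> j \<in> fst H"
    and P: "shifts ps H \<in> P"
  shows "H \<in> P"
  using H P
proof (induction ps arbitrary: H)
  case Nil
  then show ?case by (simp add: shifts_def)
next
  case (Cons p ps)
  obtain i j where p: "p = (i, j)" by force
  have ij: "i \<in> fst H" "j \<in> fst H" "i \<noteq> j" using Cons.prems(2) p by auto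
  have "shift i j H \<in> P"
    using Cons.IH[OF Mk_shift[OF Cons.prems(1) ij(1,3)]] Cons.prems(2,3) p
    by (simp add: shifts_Cons)
  then show ?case using step[OF Cons.prems(1) ij] by blast
qed

section \<open>Undoing a shift\<close>

lemma shift_eq_self:
  assumes "i \<noteq> j" and closed: "\<And>D. i \<notin> D \<Longrightarrow> j \<notin> D \<Longrightarrow> insert j D \<in> snd H \<Longrightarrow> insert i D \<in> snd H"
  shows "snd (shift i j H) = snd H"
proof (rule set_eqI)
  fix x
  show "x \<in> snd (shift i j H) \<longleftrightarrow> x \<in> snd H"
  proof (cases rule: separating_cases[of i x j])
    case 1
    then show ?thesis by (rule shift_mem_balanced)
  next
    case (2 D)
    then show ?thesis using closed shift_mem_insert_first[OF assms(1)] by blast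
  next
    case (3 D)
    then show ?thesis using closed shift_mem_insert_second[OF assms(1)] by blast
  qed
qed

lemma shift_eq_transposed:
  assumes "i \<noteq> j" and closed: "\<And>D. i \<notin> D \<Longrightarrow> j \<notin> D \<Longrightarrow> insert i D \<in> snd H \<Longrightarrow> insert j D \<in> snd H"
  shows "snd H = transposed i j (snd (shift i j H))"
proof (rule set_eqI)
  fix x
  show "x \<in> snd H \<longleftrightarrow> x \<in> transposed i j (snd (shift i j H))"
  proof (cases rule: separating_cases[of i x j])
    case 1
    then show ?thesis using shift_mem_balanced by (simp add: mem_transposed)
  next
    case (2 D)
    then have "transpose i j ` x = insert j D" using transpose_image_insert by simp
    then show ?thesis using 2 closed shift_mem_insert_second[OF assms(1)] by (auto simp: mem_transposed)
  next
    case (3 D)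
    then have "transpose i j ` x = insert i D"
      using transpose_image_insert[of j D i] by (simp add: transpose_commute)
    then show ?thesis using 3 closed shift_mem_insert_first[OF assms(1)] by (auto simp: mem_transposed)
  qed
qed

text \<open>The pairs \<open>{i \<union> C, j \<union> C}\<close> with exactly one member in \<open>snd H\<close> are those that are
  unpaired after the shift.\<close>

lemma shift_fixes_or_transposes:
  assumes ij: "i \<noteq> j"
    and uniform: "\<And>C D. i \<notin> C \<Longrightarrow> j \<notin> C \<Longrightarrow> i \<notin> D \<Longrightarrow> j \<notin> D \<Longrightarrow>
      insert i C \<in> snd (shift i j H) \<Longrightarrow> insert j C \<notin> snd (shift i j H) \<Longrightarrow>
      insert i D \<in> snd (shift i j H) \<Longrightarrow> insert j D \<notin> snd (shift i j H) \<Longrightarrow>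
      insert i C \<in> snd H \<Longrightarrow> insert i D \<in> snd H"
  shows "snd H = snd (shift i j H) \<or> snd H = transposed i j (snd (shift i j H))"
proof (cases "\<forall>C. i \<notin> C \<longrightarrow> j \<notin> C \<longrightarrow> insert j C \<in> snd H \<longrightarrow> insert i C \<in> snd H")
  case True
  then show ?thesis using shift_eq_self[OF ij] by metis
next
  case False
  then obtain C where C: "i \<notin> C" "j \<notin> C" "insert j C \<in> snd H" "insert i C \<notin> snd H" by blast
  have "insert j D \<in> snd H" if "i \<notin> D" "j \<notin> D" "insert i D \<in> snd H" for D
    using uniform[of D C] that C shift_mem_insert_first[OF ij] shift_mem_insert_second[OF ij] by blast
  then show ?thesis using shift_eq_transposed[OF ij] by metis
qed

text \<open>The Kneser graph on the \<open>r\<close>-subsets of \<open>U\<close> is connected when \<open>2 r < card U\<close>.\<close>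

lemma kneser_invariant:
  assumes U: "finite U" "r = 0 \<or> 2 * r + 1 \<le> card U"
    and step: "\<And>C D. C \<subseteq> U \<Longrightarrow> D \<subseteq> U \<Longrightarrow> card C = r \<Longrightarrow> card D = r \<Longrightarrow> C \<inter> D = {} \<Longrightarrow>
      Q C \<Longrightarrow> Q D"
    and A: "A \<subseteq> U" "card A = r" "Q A" and B: "B \<subseteq> U" "card B = r"
  shows "Q B"
proof -
  have finB: "finite B" using B U finite_subset by blast
  have "Q B" if "A \<subseteq> U" "card A = r" "card (A - B) = d" "Q A" for A d
    using that
  proof (induction d arbitrary: A)
    case 0
    then have "A \<subseteq> B" using U finite_subset by fastforce
    then have "A = B" using card_subset_eq[OF finB] 0 B by metis
    then show ?case using 0 by simp
  next
    case (Suc d)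
    have finA: "finite A" using Suc.prems U finite_subset by blast
    have "A - B \<noteq> {}" using Suc.prems(3) by (metis card.empty nat.distinct(1))
    then obtain a where a: "a \<in> A" "a \<notin> B" by blast
    have "\<not> B \<subseteq> A"
    proof
      assume "B \<subseteq> A"
      then have "B = A" using card_subset_eq[OF finA] Suc.prems(2) B(2) by simp
      then show False using a by simp
    qed
    then obtain b where b: "b \<in> B" "b \<notin> A" by blast
    have "card A > 0" using a finA card_gt_0_iff by blast
    then have r1: "r \<ge> 1" using Suc.prems(2) by simp
    have "card (insert b A) = r + 1" "insert b A \<subseteq> U"
      using finA b Suc.prems(1,2) B(1) by auto
    then have "r \<le> card (U - insert b A)"
      using U r1 finA by (simp add: card_Diff_subset)
    then obtain C where C: "C \<subseteq> U - insert b A" "card C = r"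
      using obtain_subset_with_card_n by metis
    let ?A' = "insert b (A - {a})"
    have A': "?A' \<subseteq> U" "card ?A' = r"
      using Suc.prems(1,2) B(1) a b finA r1 by (auto simp: card_Diff_singleton_if)
    have "?A' - B = (A - B) - {a}" using b by auto
    then have "card (?A' - B) = d" using Suc.prems(3) a finA by (simp add: card_Diff_singleton_if)
    moreover have "Q C" using step[of A C] C Suc.prems by auto
    then have "Q ?A'" using step[of C ?A'] C A' by auto
    ultimately show ?case using Suc.IH A' by blast
  qed
  then show ?thesis using A by blast
qed

text \<open>If \<open>i \<union> C\<close> were an edge and \<open>i \<union> D\<close> not, for disjoint \<open>C\<close>, \<open>D\<close>, then \<open>j \<union> D\<close> would be an
  edge, and together with \<open>s - 1\<close> edges avoiding both they would form a matching of size \<open>s + 1\<close>.\<close>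

lemma shift_link_uniform:
  assumes fin: "finite (snd H)" and mu: "mu (snd H) = s" "s \<ge> 1" and ij: "i \<noteq> j"
    and U: "finite U" "i \<notin> U" "j \<notin> U" "r = 0 \<or> 2 * r + 1 \<le> card U"
    and link: "\<And>D. D \<subseteq> U \<Longrightarrow> card D = r \<Longrightarrow> insert i D \<in> snd (shift i j H)"
    and avoiding: "\<And>C D. C \<subseteq> U \<Longrightarrow> D \<subseteq> U \<Longrightarrow> card C = r \<Longrightarrow> card D = r \<Longrightarrow> C \<inter> D = {} \<Longrightarrow>
      \<exists>M. is_matching (snd (shift i j H)) M \<and> card M = s - 1 \<and>
        (\<forall>e\<in>M. e \<inter> insert i (insert j (C \<union> D)) = {})"
    and A: "A \<subseteq> U" "card A = r" "insert i A \<in> snd H" and B: "B \<subseteq> U" "card B = r"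
  shows "insert i B \<in> snd H"
proof (rule kneser_invariant[OF U(1,4), where Q = "\<lambda>C. insert i C \<in> snd H", OF _ A B])
  fix C D
  assume CD: "C \<subseteq> U" "D \<subseteq> U" "card C = r" "card D = r" "C \<inter> D = {}" "insert i C \<in> snd H"
  show "insert i D \<in> snd H"
  proof (rule ccontr)
    assume iD: "insert i D \<notin> snd H"
    have "i \<notin> D" "j \<notin> D" using CD(2) U(2,3) by auto
    then have jD: "insert j D \<in> snd H"
      using link[OF CD(2,4)] shift_mem_insert_first[OF ij] iD by blast
    obtain M where M: "is_matching (snd (shift i j H)) M" "card M = s - 1"
      "\<forall>e\<in>M. e \<inter> insert i (insert j (C \<union> D)) = {}"
      using avoiding[OF CD(1-5)] by blast
    have "e \<in> snd H" if "e \<in> M" for e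
    proof -
      have "i \<notin> e" "j \<notin> e" using M(3) that by auto
      moreover have "e \<in> snd (shift i j H)" using M(1) that by (auto simp: is_matching_def)
      ultimately show ?thesis using shift_mem_balanced[of i e j H] by simp
    qed
    then have "is_matching (snd H) M" using M(1) by (auto simp: is_matching_def)
    moreover have "\<forall>e\<in>M. e \<inter> (insert i C \<union> insert j D) = {}" using M(3) by auto
    moreover have "insert i C \<inter> insert j D = {}"
      using CD(1,5) U(2,3) \<open>i \<notin> D\<close> ij by auto
    ultimately have "card M + 2 \<le> mu (snd H)"
      using card_add_two_le_mu[OF fin _ CD(6) jD] by blast
    then show False using M(2) mu by simp
  qed
qed

lemma mem_of_shift_fixed_or_transposed:
  assumes "snd H = snd (shift i j H) \<or> snd H = transposed i j (snd (shift i j H))"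
    and "shift i j H \<in> P" and "\<And>E. (fst H, E) \<in> P \<Longrightarrow> (fst H, transposed i j E) \<in> P"
  shows "H \<in> P"
proof -
  have shift: "(fst H, snd (shift i j H)) \<in> P" using assms(2) by (metis fst_shift prod.collapse)
  from assms(1) show ?thesis
  proof
    assume "snd H = snd (shift i j H)"
    then show ?thesis using shift by (metis prod.collapse)
  next
    assume "snd H = transposed i j (snd (shift i j H))"
    then show ?thesis using assms(3)[OF shift] by (metis prod.collapse)
  qed
qed

section \<open>Covers\<close>

lemma Cov_transposed:
  assumes "(V, E) \<in> Cov k n s" "i \<in> V" "j \<in> V"
  shows "(V, transposed i j E) \<in> Cov k n s"
proof -
  obtain S where S: "S \<subseteq> V" "card S = s" "E = {e. e \<subseteq> V \<and> card e = k \<and> e \<inter> S \<noteq> {}}"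
    using assms(1) by (auto simp: Cov_def)
  have V: "transpose i j ` V = V" using assms(2,3) by simp
  have "transposed i j E = {e. e \<subseteq> V \<and> card e = k \<and> e \<inter> transpose i j ` S \<noteq> {}}"
  proof (rule set_eqI)
    show "x \<in> transposed i j E \<longleftrightarrow> x \<in> {e. e \<subseteq> V \<and> card e = k \<and> e \<inter> transpose i j ` S \<noteq> {}}"
      for x
      unfolding S(3) by (simp only: mem_transposed mem_Collect_eq transpose_image_subset_iff V
        card_transpose_image transpose_image_disjoint_iff)
  qed
  moreover have "transpose i j ` S \<subseteq> V" "card (transpose i j ` S) = s"
    using S V by auto
  ultimately show ?thesis using assms(1) by (auto simp: Cov_def)
qed

lemma cover_unpaired:
  assumes E': "E' = {e. e \<subseteq> V \<and> card e = k \<and> e \<inter> S \<noteq> {}}" and V: "finite V" "j \<in> V"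
    and C: "insert i C \<in> E'" "insert j C \<notin> E'" "i \<notin> C" "j \<notin> C"
  shows "i \<in> S" "j \<notin> S" "C \<subseteq> V - S - {j}" "card C = k - 1"
proof -
  have iC: "insert i C \<subseteq> V" "card (insert i C) = k" "insert i C \<inter> S \<noteq> {}"
    using C(1) unfolding E' by simp_all
  have "finite C" using finite_subset[OF iC(1) V(1)] by simp
  then have cardC: "card C = k - 1" using iC(2) C(3) by simp
  have "card (insert j C) = k" using \<open>finite C\<close> C(3,4) iC(2) by simp
  moreover have "insert j C \<subseteq> V" using iC(1) V(2) by blast
  ultimately have jC: "insert j C \<inter> S = {}" using C(2) unfolding E' by simp
  then show "j \<notin> S" "card C = k - 1" using cardC by auto
  show "C \<subseteq> V - S - {j}" using iC(1) jC C(4) by auto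
  show "i \<in> S" using iC(3) jC by auto
qed

lemma cover_room_matching:
  fixes k s n :: nat
  assumes "k * (s + 1) \<le> n" "s \<ge> 1" "k \<ge> 1"
  shows "(s - 1) * (k - 1) \<le> n - s - 1 - 2 * (k - 1)"
  using assms by (cases s; cases k) (auto simp: algebra_simps)

lemma cover_room_two_edges:
  fixes k s n :: nat
  assumes "k * (s + 1) \<le> n" "s \<ge> 1" "k \<ge> 2" "n \<noteq> 2 * k"
  shows "2 * (k - 1) + 1 \<le> n - s - 1"
proof (cases "s = 1")
  case True
  then show ?thesis using assms by simp
next
  case False
  then obtain a b where "s = a + 2" "k = b + 2"
    using assms(2,3) by (metis add.commute le_Suc_ex le_antisym not_less_eq_eq one_add_one plus_1_eq_Suc)
  then show ?thesis using assms(1) by (simp add: algebra_simps)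
qed

lemma cover_matching_avoiding:
  assumes V: "finite V" "card V = n" and S: "S \<subseteq> V" "card S = s" "i \<in> S" and j: "j \<in> V - S"
    and k1: "k \<ge> 1" and big: "k * (s + 1) \<le> n"
    and XY: "X \<subseteq> V - S - {j}" "Y \<subseteq> V - S - {j}" "card X = k - 1" "card Y = k - 1" "X \<inter> Y = {}"
  shows "\<exists>M. is_matching {e. e \<subseteq> V \<and> card e = k \<and> e \<inter> S \<noteq> {}} M \<and> card M = s - 1 \<and>
    (\<forall>e\<in>M. e \<inter> insert i (insert j (X \<union> Y)) = {})"
proof -
  define U R where "U = V - S - {j}" and "R = V - S - {j} - (X \<union> Y)"
  have finS: "finite S" "card (S - {i}) = s - 1" using finite_subset[OF S(1) V(1)] S(2,3) by auto
  have "card (V - S) = n - s" using S(1,2) V finS by (simp add: card_Diff_subset)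
  then have cardU: "card U = n - s - 1" using j V(1) by (simp add: U_def card_Diff_singleton)
  have "finite X" "finite Y" using finite_subset[OF XY(1)] finite_subset[OF XY(2)] V(1) by auto
  then have "card (X \<union> Y) = 2 * (k - 1)" using XY(3-5) by (simp add: card_Un_disjoint)
  then have "card R = card U - 2 * (k - 1)"
    using XY(1,2) \<open>finite X\<close> \<open>finite Y\<close> by (simp add: R_def U_def card_Diff_subset)
  moreover have "card S > 0" using finS(1) S(3) card_gt_0_iff by blast
  ultimately have room: "card (S - {i}) * (k - 1) \<le> card R"
    using cover_room_matching[OF big _ k1] cardU finS(2) S(2) by simp
  have "finite R" "(S - {i}) \<inter> R = {}" using V(1) by (auto simp: R_def)
  then obtain M where M:
    "is_matching {e. e \<subseteq> (S - {i}) \<union> R \<and> card e = k \<and> e \<inter> (S - {i}) \<noteq> {}} M"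
    "card M = card (S - {i})"
    using exists_matching_cover[OF _ _ _ room k1] finS by blast
  have M_sub: "e \<subseteq> (S - {i}) \<union> R" "card e = k" "e \<inter> S \<noteq> {}" if "e \<in> M" for e
    using M(1) that by (auto simp: is_matching_def)
  have SR: "(S - {i}) \<union> R \<subseteq> V" using S(1) by (auto simp: R_def)
  have "e \<in> {e. e \<subseteq> V \<and> card e = k \<and> e \<inter> S \<noteq> {}}" if "e \<in> M" for e
    using order_trans[OF M_sub(1)[OF that] SR] M_sub(2,3)[OF that] by simp
  then have "M \<subseteq> {e. e \<subseteq> V \<and> card e = k \<and> e \<inter> S \<noteq> {}}" by blast
  then have "is_matching {e. e \<subseteq> V \<and> card e = k \<and> e \<inter> S \<noteq> {}} M"
    using M(1) by (simp add: is_matching_def)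
  moreover have "insert i (insert j (X \<union> Y)) \<inter> ((S - {i}) \<union> R) = {}"
    using S(3) j XY(1,2) by (auto simp: R_def)
  then have "\<forall>e\<in>M. e \<inter> insert i (insert j (X \<union> Y)) = {}"
    using M_sub(1) by auto
  ultimately show ?thesis using M(2) finS(2) by auto
qed

lemma cover_link_uniform:
  assumes H: "H \<in> Mk k n s" and ij: "i \<noteq> j" "j \<in> fst H" and n: "n \<noteq> 2 * k" "k * (s + 1) \<le> n"
    and S: "S \<subseteq> fst H" "card S = s"
    and E': "snd (shift i j H) = {e. e \<subseteq> fst H \<and> card e = k \<and> e \<inter> S \<noteq> {}}"
    and C: "i \<notin> C" "j \<notin> C" "insert i C \<in> snd (shift i j H)" "insert j C \<notin> snd (shift i j H)"
    and D: "i \<notin> D" "j \<notin> D" "insert i D \<in> snd (shift i j H)" "insert j D \<notin> snd (shift i j H)"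
    and iC: "insert i C \<in> snd H"
  shows "insert i D \<in> snd H"
proof -
  have H': "kgraph k H" "card (fst H) = n" "mu (snd H) = s" and finV: "finite (fst H)"
    using H by (auto simp: Mk_def Hk_def kgraph_def)
  note Cu = cover_unpaired[OF E' finV ij(2) C(3,4,1,2)]
    and Du = cover_unpaired[OF E' finV ij(2) D(3,4,1,2)]
  have k1: "k \<ge> 1" using kgraph_edge_card_pos[OF H'(1) insertI1 iC] .
  have "card S > 0" using Cu(1) finite_subset[OF S(1) finV] card_gt_0_iff by blast
  then have s1: "s \<ge> 1" using S(2) by simp
  define U where "U = fst H - S - {j}"
  have finU: "finite U" and iU: "i \<notin> U" "j \<notin> U" using finV Cu(1) by (auto simp: U_def)
  have "card (fst H - S) = n - s"
    using S H'(2) finite_subset[OF S(1) finV] by (simp add: card_Diff_subset)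
  then have "card U = n - s - 1" using Cu(2) ij(2) finV by (simp add: U_def card_Diff_singleton)
  then have room: "k - 1 = 0 \<or> 2 * (k - 1) + 1 \<le> card U"
    using cover_room_two_edges[OF n(2) s1 _ n(1)] by (cases "k \<ge> 2") auto
  have link: "insert i X \<in> snd (shift i j H)" if X: "X \<subseteq> U" "card X = k - 1" for X
  proof -
    have "finite X" "i \<notin> X" using finite_subset[OF X(1) finU] X(1) iU by auto
    then show ?thesis using X k1 Cu(1) S(1) by (auto simp: E' U_def)
  qed
  have avoiding: "\<exists>M. is_matching (snd (shift i j H)) M \<and> card M = s - 1 \<and>
      (\<forall>e\<in>M. e \<inter> insert i (insert j (X \<union> Y)) = {})"
    if XY: "X \<subseteq> U" "Y \<subseteq> U" "card X = k - 1" "card Y = k - 1" "X \<inter> Y = {}" for X Y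
    using cover_matching_avoiding[OF finV H'(2) S Cu(1) _ k1 n(2) XY[unfolded U_def]] ij(2) Cu(2)
    unfolding E' by simp
  show ?thesis
    by (rule shift_link_uniform[OF kgraph_finite_edges[OF H'(1)] H'(3) s1 ij(1) finU iU room link avoiding
          Cu(3)[folded U_def] Cu(4) iC Du(3)[folded U_def] Du(4)])
qed

lemma Cov_of_shift_Cov:
  assumes H: "H \<in> Mk k n s" and ij: "i \<in> fst H" "j \<in> fst H" "i \<noteq> j"
    and Cov: "shift i j H \<in> Cov k n s" and n: "n \<noteq> 2 * k"
  shows "H \<in> Cov k n s"
proof -
  obtain S where S: "S \<subseteq> fst H" "card S = s"
    and E': "snd (shift i j H) = {e. e \<subseteq> fst H \<and> card e = k \<and> e \<inter> S \<noteq> {}}"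
    using Cov by (auto simp: Cov_def)
  have "snd H = snd (shift i j H) \<or> snd H = transposed i j (snd (shift i j H))"
  proof (cases "n < k * (s + 1)")
    case True
    then show ?thesis using Mk_complete[OF H] Mk_complete[OF Mk_shift[OF H ij(1,3)]] by simp
  next
    case False
    then have big: "k * (s + 1) \<le> n" by simp
    show ?thesis
    proof (rule shift_fixes_or_transposes[OF ij(3)])
      fix C D
      assume "i \<notin> C" "j \<notin> C" "insert i C \<in> snd (shift i j H)" "insert j C \<notin> snd (shift i j H)"
        "i \<notin> D" "j \<notin> D" "insert i D \<in> snd (shift i j H)" "insert j D \<notin> snd (shift i j H)"
        "insert i C \<in> snd H"
      then show "insert i D \<in> snd H" by (rule cover_link_uniform[OF H ij(3,2) n big S E'])
    qed
  qed
  then show ?thesis using Cov by (rule mem_of_shift_fixed_or_transposed) (rule Cov_transposed[OF _ ij(1,2)])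
qed

section \<open>Cliques\<close>

lemma Cl_transposed:
  assumes "(V, E) \<in> Cl k n s" "i \<in> V" "j \<in> V"
  shows "(V, transposed i j E) \<in> Cl k n s"
proof -
  obtain T where T: "T \<subseteq> V" "card T = k * s + k - 1" "E = {e. e \<subseteq> T \<and> card e = k}"
    using assms(1) by (auto simp: Cl_def)
  have V: "transpose i j ` V = V" using assms(2,3) by simp
  have "transposed i j E = {e. e \<subseteq> transpose i j ` T \<and> card e = k}"
  proof (rule set_eqI)
    show "x \<in> transposed i j E \<longleftrightarrow> x \<in> {e. e \<subseteq> transpose i j ` T \<and> card e = k}" for x
      unfolding T(3)
      by (simp only: mem_transposed mem_Collect_eq transpose_image_subset_iff card_transpose_image)
  qed
  moreover have "transpose i j ` T \<subseteq> V" "card (transpose i j ` T) = k * s + k - 1"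
    using T V by auto
  ultimately show ?thesis using assms(1) by (auto simp: Cl_def)
qed

lemma clique_unpaired:
  assumes E': "E' = {e. e \<subseteq> T \<and> card e = k}" and T: "finite T"
    and C: "insert i C \<in> E'" "insert j C \<notin> E'" "i \<notin> C" "j \<notin> C"
  shows "i \<in> T" "j \<notin> T" "C \<subseteq> T - {i}" "card C = k - 1"
proof -
  have iC: "insert i C \<subseteq> T" "card (insert i C) = k"
    using C(1) unfolding E' by simp_all
  have "finite C" using finite_subset[OF iC(1) T] by simp
  then have "card C = k - 1" "card (insert j C) = k" using iC(2) C(3,4) by simp_all
  then show "j \<notin> T" using C(2) iC(1) unfolding E' by auto
  show "i \<in> T" "C \<subseteq> T - {i}" "card C = k - 1"
    using iC(1) C(3) \<open>card C = k - 1\<close> by auto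
qed

lemma clique_room_matching:
  fixes k s :: nat
  assumes "s \<ge> 1" "k \<ge> 1"
  shows "(s - 1) * k \<le> (k * s + k - 1 - 1) - 2 * (k - 1)"
  using assms by (cases s; cases k) (auto simp: algebra_simps)

lemma clique_room_two_edges:
  fixes k s :: nat
  assumes "s \<ge> 2" "k \<ge> 1"
  shows "2 * (k - 1) + 1 \<le> k * s + k - 1 - 1"
  using assms by (cases s; cases k) (auto simp: algebra_simps)

lemma binomial_clique_lt_star:
  fixes k n :: nat
  assumes "k \<ge> 2" "n \<ge> 2 * k + 1"
  shows "(2 * k - 1) choose k < (n - 1) choose (k - 1)"
proof -
  obtain b where b: "k = Suc (Suc b)" using assms(1) by (metis add_2_eq_Suc le_Suc_ex)
  define m where "m = 2 * b + 3"
  have m: "2 * k - 1 = m" "k - 1 = Suc b" "m - k = Suc b" using b by (simp_all add: m_def)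
  have "(2 * k - 1) choose k = m choose (m - k)"
    unfolding m(1) by (rule binomial_symmetric) (simp add: b m_def)
  also have "\<dots> < (m choose b) + (m choose (Suc b))"
    unfolding m(3) by (simp add: m_def)
  also have "\<dots> = Suc m choose (Suc b)"
    by (rule binomial_Suc_Suc[symmetric])
  also have "\<dots> \<le> (n - 1) choose (k - 1)"
    unfolding m(2) using assms b by (intro binomial_right_mono) (simp add: m_def)
  finally show ?thesis .
qed

definition star :: "nat set \<Rightarrow> nat \<Rightarrow> nat \<Rightarrow> nat set set" where
  "star V v k = insert v ` ksubsets (V - {v}) (k - 1)"

lemma card_star:
  assumes "finite V" "v \<in> V"
  shows "card (star V v k) = (card V - 1) choose (k - 1)"
proof -
  have "inj_on (insert v) (ksubsets (V - {v}) (k - 1))"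
    by (rule inj_onI) (auto simp: ksubsets_def insert_ident)
  then have "card (star V v k) = card (ksubsets (V - {v}) (k - 1))"
    unfolding star_def by (rule card_image)
  also have "\<dots> = (card V - 1) choose (k - 1)"
    unfolding ksubsets_def using n_subsets[of "V - {v}" "k - 1"] assms by simp
  finally show ?thesis .
qed

lemma star_mem_Hk:
  assumes V: "finite V" "v \<in> V" and k: "1 \<le> k" "k \<le> card V"
  shows "(V, star V v k) \<in> Hk k (card V) 1"
proof -
  have sub: "star V v k \<subseteq> ksubsets V k"
  proof
    fix e assume "e \<in> star V v k"
    then obtain B where B: "B \<subseteq> V - {v}" "card B = k - 1" "e = insert v B"
      by (auto simp: star_def ksubsets_def)
    have "finite B" "v \<notin> B" using finite_subset[OF B(1)] V(1) B(1) by auto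
    then show "e \<in> ksubsets V k" using B V(2) k(1) by (auto simp: ksubsets_def)
  qed
  have fin: "finite (star V v k)" using finite_subset[OF sub finite_ksubsets[OF V(1)]] .
  have "mu (star V v k) \<le> 1"
  proof (rule mu_le[OF fin])
    fix M assume M: "is_matching (star V v k) M"
    have "v \<in> e" if "e \<in> M" for e using M that by (auto simp: is_matching_def star_def)
    then have "\<forall>a\<in>M. \<forall>b\<in>M. a = b" using M unfolding is_matching_def by blast
    then show "card M \<le> 1"
      using finite_subset[of M "star V v k"] M fin by (auto simp: is_matching_def card_le_Suc0_iff_eq)
  qed
  moreover have "1 \<le> mu (star V v k)"
  proof -
    have "k - 1 \<le> card (V - {v})" using V k(2) by simp
    then obtain B where "B \<subseteq> V - {v}" "card B = k - 1" using obtain_subset_with_card_n by metis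
    then have "is_matching (star V v k) {insert v B}"
      by (auto simp: is_matching_def star_def ksubsets_def)
    then show ?thesis using card_le_mu[OF fin] by fastforce
  qed
  ultimately show ?thesis
    using sub V by (simp add: Hk_def kgraph_iff_ksubsets)
qed

lemma Mk_one_not_Cl:
  assumes H: "H \<in> Mk k n 1" and k: "k \<ge> 2" and n: "n \<ge> 2 * k + 1"
  shows "H \<notin> Cl k n 1"
proof
  assume "H \<in> Cl k n 1"
  then obtain T where T: "T \<subseteq> fst H" "card T = 2 * k - 1" "snd H = {e. e \<subseteq> T \<and> card e = k}"
    by (auto simp: Cl_def)
  have H': "card (fst H) = n" "card (snd H) = mu_k k n 1" "finite (fst H)"
    using H by (auto simp: Mk_def Hk_def kgraph_def)
  have clique: "card (snd H) = (2 * k - 1) choose k"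
    using T(2,3) n_subsets[OF finite_subset[OF T(1) H'(3)], of k] by simp
  obtain v where v: "v \<in> fst H" using H'(1) n by fastforce
  have "(fst H, star (fst H) v k) \<in> Hk k n 1"
    using star_mem_Hk[OF H'(3) v] k n H'(1) by simp
  then have "card (star (fst H) v k) \<le> card (snd H)"
    using card_le_mu_k H'(2) by (metis snd_conv)
  then have "(n - 1) choose (k - 1) \<le> (2 * k - 1) choose k"
    using card_star[OF H'(3) v] H'(1) clique by simp
  then show False using binomial_clique_lt_star[OF k n] by simp
qed

lemma clique_matching_avoiding:
  assumes T: "finite T" "card T = k * s + k - 1" "i \<in> T" "j \<notin> T" and s1: "s \<ge> 1" and k1: "k \<ge> 1"
    and XY: "X \<subseteq> T - {i}" "Y \<subseteq> T - {i}" "card X = k - 1" "card Y = k - 1" "X \<inter> Y = {}"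
  shows "\<exists>M. is_matching {e. e \<subseteq> T \<and> card e = k} M \<and> card M = s - 1 \<and>
    (\<forall>e\<in>M. e \<inter> insert i (insert j (X \<union> Y)) = {})"
proof -
  define R where "R = T - {i} - (X \<union> Y)"
  have "finite X" "finite Y" using finite_subset[OF XY(1)] finite_subset[OF XY(2)] T(1) by auto
  then have "card (X \<union> Y) = 2 * (k - 1)" using XY(3-5) by (simp add: card_Un_disjoint)
  then have "card R = card (T - {i}) - 2 * (k - 1)"
    using XY(1,2) \<open>finite X\<close> \<open>finite Y\<close> by (simp add: R_def card_Diff_subset)
  then have room: "(s - 1) * k \<le> card R"
    using clique_room_matching[OF s1 k1] T by simp
  have "finite R" using T(1) by (simp add: R_def)
  then obtain M where M: "is_matching (ksubsets R k) M" "card M = s - 1"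
    using exists_matching_ksubsets[OF _ room k1] by blast
  have "ksubsets R k \<subseteq> {e. e \<subseteq> T \<and> card e = k}" by (auto simp: ksubsets_def R_def)
  then have "is_matching {e. e \<subseteq> T \<and> card e = k} M"
    using M(1) by (auto simp: is_matching_def)
  moreover have "\<forall>e\<in>M. e \<inter> insert i (insert j (X \<union> Y)) = {}"
  proof
    fix e assume "e \<in> M"
    then have "e \<subseteq> R" using M(1) by (auto simp: is_matching_def ksubsets_def)
    then show "e \<inter> insert i (insert j (X \<union> Y)) = {}"
      using T(4) by (auto simp: R_def)
  qed
  ultimately show ?thesis using M(2) by auto
qed

lemma clique_link_uniform:
  assumes H: "H \<in> Mk k n s" and ij: "i \<noteq> j" "i \<in> fst H" "j \<in> fst H" and n: "n \<noteq> 2 * k"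
    and T: "T \<subseteq> fst H" "card T = k * s + k - 1"
    and E': "snd (shift i j H) = {e. e \<subseteq> T \<and> card e = k}"
    and C: "i \<notin> C" "j \<notin> C" "insert i C \<in> snd (shift i j H)" "insert j C \<notin> snd (shift i j H)"
    and D: "i \<notin> D" "j \<notin> D" "insert i D \<in> snd (shift i j H)" "insert j D \<notin> snd (shift i j H)"
    and iC: "insert i C \<in> snd H"
  shows "insert i D \<in> snd H"
proof -
  have H': "kgraph k H" "card (fst H) = n" "mu (snd H) = s" and finV: "finite (fst H)"
    using H by (auto simp: Mk_def Hk_def kgraph_def)
  have finT: "finite T" using finite_subset[OF T(1) finV] .
  note Cu = clique_unpaired[OF E' finT C(3,4,1,2)] and Du = clique_unpaired[OF E' finT D(3,4,1,2)]
  have k1: "k \<ge> 1" using kgraph_edge_card_pos[OF H'(1) insertI1 iC] .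
  have "insert i C \<subseteq> T" using Cu(1,3) by blast
  moreover have "card (insert i C) = k"
    using Cu(4) C(1) finite_subset[OF Cu(3) finite_Diff[OF finT]] k1 by simp
  ultimately have "k \<le> card T" using card_mono[OF finT] by metis
  then have s1: "s \<ge> 1" using T(2) k1 by (cases s) auto
  have "card T < n" using psubset_card_mono[OF finV] T(1) Cu(2) ij(3) H'(2) by auto
  then have n_big: "n \<ge> 2 * k + 1" using T(2) s1 n by (cases s) (auto simp: algebra_simps)
  show ?thesis
  proof (cases "k \<ge> 2 \<and> s = 1")
    case True
    have "shift i j H \<in> Cl k n s" using T E' H'(2) finV by (auto simp: Cl_def)
    then show ?thesis using True Mk_one_not_Cl[OF _ _ n_big] Mk_shift[OF H ij(2,1)] by simp
  next
    case False
    have finU: "finite (T - {i})" and iU: "i \<notin> T - {i}" "j \<notin> T - {i}" using finT Cu(2) by auto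
    have "card (T - {i}) = k * s + k - 1 - 1" using T(2) Cu(1) finT by simp
    then have room: "k - 1 = 0 \<or> 2 * (k - 1) + 1 \<le> card (T - {i})"
      using clique_room_two_edges[OF _ k1] False s1 by (cases "k \<ge> 2") auto
    have link: "insert i X \<in> snd (shift i j H)" if X: "X \<subseteq> T - {i}" "card X = k - 1" for X
    proof -
      have "finite X" "i \<notin> X" using finite_subset[OF X(1) finU] X(1) by auto
      then show ?thesis using X k1 Cu(1) by (auto simp: E')
    qed
    have avoiding: "\<exists>M. is_matching (snd (shift i j H)) M \<and> card M = s - 1 \<and>
        (\<forall>e\<in>M. e \<inter> insert i (insert j (X \<union> Y)) = {})"
      if XY: "X \<subseteq> T - {i}" "Y \<subseteq> T - {i}" "card X = k - 1" "card Y = k - 1" "X \<inter> Y = {}"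
      for X Y
      using clique_matching_avoiding[OF finT T(2) Cu(1,2) s1 k1 XY] unfolding E' .
    show ?thesis
      by (rule shift_link_uniform[OF kgraph_finite_edges[OF H'(1)] H'(3) s1 ij(1) finU iU room link
            avoiding Cu(3,4) iC Du(3,4)])
  qed
qed

lemma Cl_of_shift_Cl:
  assumes H: "H \<in> Mk k n s" and ij: "i \<in> fst H" "j \<in> fst H" "i \<noteq> j"
    and Cl: "shift i j H \<in> Cl k n s" and n: "n \<noteq> 2 * k"
  shows "H \<in> Cl k n s"
proof -
  obtain T where T: "T \<subseteq> fst H" "card T = k * s + k - 1"
    and E': "snd (shift i j H) = {e. e \<subseteq> T \<and> card e = k}"
    using Cl by (auto simp: Cl_def)
  have "snd H = snd (shift i j H) \<or> snd H = transposed i j (snd (shift i j H))"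
  proof (rule shift_fixes_or_transposes[OF ij(3)])
    fix C D
    assume "i \<notin> C" "j \<notin> C" "insert i C \<in> snd (shift i j H)" "insert j C \<notin> snd (shift i j H)"
      "i \<notin> D" "j \<notin> D" "insert i D \<in> snd (shift i j H)" "insert j D \<notin> snd (shift i j H)"
      "insert i C \<in> snd H"
    then show "insert i D \<in> snd H" by (rule clique_link_uniform[OF H ij(3,1,2) n T E'])
  qed
  then show ?thesis using Cl by (rule mem_of_shift_fixed_or_transposed) (rule Cl_transposed[OF _ ij(1,2)])
qed

theorem lemma6:
  fixes k n s :: nat and G Sh :: hgraph and ps :: "(nat \<times> nat) list"
  assumes "G \<in> Mk k n s"
    and "\<forall>(i, j) \<in> set ps. i < j \<and> i \<in> fst G \<and> j \<in> fst G"
    and "Sh = shifts ps G"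
    and "\<forall>i \<in> fst G. \<forall>j \<in> fst G. i < j \<longrightarrow> shift i j Sh = Sh"
  shows "Sh \<in> Mk k n s
    \<and> (n \<noteq> 2 * k \<and> Sh \<in> Cov k n s \<longrightarrow> G \<in> Cov k n s)
    \<and> (n \<noteq> 2 * k \<and> Sh \<in> Cl k n s \<longrightarrow> G \<in> Cl k n s)"
proof (intro conjI impI)
  show "Sh \<in> Mk k n s" using Mk_shifts[OF assms(1,2)] assms(3) by simp
next
  assume "n \<noteq> 2 * k \<and> Sh \<in> Cov k n s"
  then show "G \<in> Cov k n s"
    using reflect_shifts[OF _ assms(1,2)] Cov_of_shift_Cov assms(3) by metis
next
  assume "n \<noteq> 2 * k \<and> Sh \<in> Cl k n s"
  then show "G \<in> Cl k n s"
    using reflect_shifts[OF _ assms(1,2)] Cl_of_shift_Cl assms(3) by metis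
qed

end
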